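(* Let $\beta>0$, $\delta\in[0,\beta)$ and $q_2>0$. There exists $c>0$ such that for every $N\in\mathbb N$ and every $q\in(0,q_2]$, $$D_N(q,\delta)\le c\,e^{N\psi(q,\delta)}.$$
   Context: $c_\beta=\frac{1+e^{-\beta/2}}{1-e^{-\beta/2}}$, $\mathbf P_\beta(k)=e^{-\beta|k|/2}/c_\beta$ on $\mathbb Z$; $X=(X_i)_{i\ge0}$ is a random walk with $X_0=0$ and i.i.d. increments of law $\mathbf P_\beta$ (expectation $\mathbf E_\beta$), $A_N=\sum_{i=0}^NX_i$. $\mathcal L(h)=\log\mathbf E_\beta[e^{hX_1}]$ for $|h|<\beta/2$. $\mathcal G(h)=\int_0^1\mathcal L(h(x-\frac12))dx$, $\tilde h(q)$ the unique $h\in[0,\beta)$ with $\mathcal G'(h)=q$; $\mathcal H_\delta(s)=\int_0^1\mathcal L(sx+\delta-\frac\beta2)dx$ for $s\in(-\delta,\beta-\delta)$, $s_\delta(q)$ the unique solution of $\mathcal H_\delta'(s)=q$; $\delta_0(q)=\frac\beta2-\frac{\tilde h(q)}2$; $\psi(q,\delta)=\mathcal G(\tilde h(q))-q\tilde h(q)$ if $0\le\delta\le\delta_0(q)$ and $\mathcal H_\delta(s_\delta(q))-qs_\delta(q)$ if $\delta_0(q)<\delta<\beta$. $D_N(q,\delta)=\mathbf E_\beta\big[e^{(\delta-\beta/2)X_N}\mathbf 1\{A_N=qN^2,\ X_i>0\ \forall\,0<i\le N\}\big]$. *)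

theory Defs
  imports "HOL-Analysis.Analysis"
begin

definition c_beta :: "real \<Rightarrow> real" where
  "c_beta \<beta> = (1 + exp (- \<beta> / 2)) / (1 - exp (- \<beta> / 2))"

definition P_beta :: "real \<Rightarrow> int \<Rightarrow> real" where
  "P_beta \<beta> k = exp (- \<beta> * \<bar>real_of_int k\<bar> / 2) / c_beta \<beta>"

text \<open>Log-moment generating function L(h) = log E[exp(h X_1)], for |h| < beta/2.\<close>

definition LL :: "real \<Rightarrow> real \<Rightarrow> real" where
  "LL \<beta> h = ln (\<Sum>\<^sub>\<infinity>k\<in>(UNIV::int set). P_beta \<beta> k * exp (h * real_of_int k))"

definition GG :: "real \<Rightarrow> real \<Rightarrow> real" where
  "GG \<beta> h = integral {0..1} (\<lambda>x. LL \<beta> (h * (x - 1/2)))"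

definition h_tilde :: "real \<Rightarrow> real \<Rightarrow> real" where
  "h_tilde \<beta> q = (THE h. 0 \<le> h \<and> h < \<beta> \<and> deriv (GG \<beta>) h = q)"

definition HH :: "real \<Rightarrow> real \<Rightarrow> real \<Rightarrow> real" where
  "HH \<beta> \<delta> s = integral {0..1} (\<lambda>x. LL \<beta> (s * x + \<delta> - \<beta> / 2))"

definition s_delta :: "real \<Rightarrow> real \<Rightarrow> real \<Rightarrow> real" where
  "s_delta \<beta> \<delta> q = (THE s. - \<delta> < s \<and> s < \<beta> - \<delta> \<and> deriv (HH \<beta> \<delta>) s = q)"

definition delta0 :: "real \<Rightarrow> real \<Rightarrow> real" where
  "delta0 \<beta> q = \<beta> / 2 - h_tilde \<beta> q / 2"

definition psi :: "real \<Rightarrow> real \<Rightarrow> real \<Rightarrow> real" where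
  "psi \<beta> q \<delta> =
     (if 0 \<le> \<delta> \<and> \<delta> \<le> delta0 \<beta> q
      then GG \<beta> (h_tilde \<beta> q) - q * h_tilde \<beta> q
      else HH \<beta> \<delta> (s_delta \<beta> \<delta> q) - q * s_delta \<beta> \<delta> q)"

definition walk_X :: "int list \<Rightarrow> nat \<Rightarrow> int" where
  "walk_X ks i = sum_list (take i ks)"

definition walk_A :: "int list \<Rightarrow> nat \<Rightarrow> int" where
  "walk_A ks N = (\<Sum>i=0..N. walk_X ks i)"

definition path_prob :: "real \<Rightarrow> int list \<Rightarrow> real" where
  "path_prob \<beta> ks = (\<Prod>k\<leftarrow>ks. P_beta \<beta> k)"

definition DD :: "real \<Rightarrow> nat \<Rightarrow> real \<Rightarrow> real \<Rightarrow> real" where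
  "DD \<beta> N q \<delta> =
     (\<Sum>\<^sub>\<infinity>ks\<in>{ks. length ks = N \<and> real_of_int (walk_A ks N) = q * real N ^ 2
                 \<and> (\<forall>i. 0 < i \<and> i \<le> N \<longrightarrow> walk_X ks i > 0)}.
        path_prob \<beta> ks * exp ((\<delta> - \<beta> / 2) * real_of_int (walk_X ks N)))"

end

theory Submission
  imports Defs
begin

text \<open>
  The log-moment generating function has the closed form
  \<open>L(u) = 2 ln(1 - r) - ln(1 - r e\<^sup>u) - ln(1 - r e\<^sup>-\<^sup>u)\<close> with \<open>r = e\<^sup>-\<^sup>\<beta>\<^sup>/\<^sup>2\<close>; it is even,
  strictly convex and unbounded near \<open>\<plusminus>\<beta>/2\<close>.  Since \<open>A\<^sub>N = \<Sum>\<^sub>i (N - i) k\<^sub>i\<close> and \<open>X\<^sub>N \<ge> 0\<close>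
  on the event, tilting the \<open>i\<close>-th step by \<open>b + s (N - i)/N\<close> with \<open>b \<ge> \<delta> - \<beta>/2\<close> gives
  \<open>D\<^sub>N \<le> exp (- s q N + \<Sum>\<^sub>i L(b + s (N - i)/N))\<close>, and as \<open>L\<close> is Lipschitz on compacts the
  Riemann sum is at most \<open>N \<integral>\<^sub>0\<^sup>1 L(b + s x) dx\<close> plus a constant.  The choice \<open>b = -h/2, s = h\<close>
  with \<open>h = h_tilde(q)\<close> is admissible exactly when \<open>\<delta> \<le> \<delta>\<^sub>0(q)\<close> and yields \<open>G(h) - q h\<close>;
  otherwise \<open>b = \<delta> - \<beta>/2, s = s_delta(q)\<close> yields \<open>H\<^sub>\<delta>(s) - q s\<close>.  Both roots exist by the
  intermediate value theorem for the strictly increasing \<open>G'\<close> and \<open>H\<^sub>\<delta>'\<close>, and they increase with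
  \<open>q\<close>, which makes the constants uniform in \<open>q \<le> q\<^sub>2\<close>.
\<close>

lemma integral_less_real_except_point:
  fixes f g :: "real \<Rightarrow> real"
  assumes "a < b" "continuous_on {a..b} f" "continuous_on {a..b} g"
    and "\<And>x. x \<in> {a..b} \<Longrightarrow> x \<noteq> p \<Longrightarrow> f x < g x"
  shows "integral {a..b} f < integral {a..b} g"
proof (cases "a < p \<and> p < b")
  case True
  have "integral {a..p} f < integral {a..p} g" "integral {p..b} f < integral {p..b} g"
    by (rule integral_less_real; use assms True in \<open>auto intro: continuous_on_subset\<close>)+
  moreover have "integral {a..b} h = integral {a..p} h + integral {p..b} h"
    if "continuous_on {a..b} h" for h :: "real \<Rightarrow> real"
    using Henstock_Kurzweil_Integration.integral_combine[of a p b h] True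
      integrable_continuous_interval[OF that] by simp
  ultimately show ?thesis using assms(2,3) by simp
qed (use assms in \<open>auto intro!: integral_less_real\<close>)

lemma integral_quadratic_weight: "integral {0..1} (\<lambda>x::real. ((2*x - 1)^2 + 1) / 2) = 2/3"
proof -
  have "((\<lambda>x::real. ((2*x - 1)^2 + 1) / 2) has_integral
        (((2*1-1)^3/12 + 1/2) - ((2*0-1)^3/12 + 0/2))) {0..1::real}"
  proof (rule fundamental_theorem_of_calculus)
    fix x :: real
    have "((\<lambda>x::real. (2*x-1)^3/12 + x/2) has_real_derivative ((2*x - 1)^2 + 1) / 2) (at x)"
      by (rule derivative_eq_intros refl | simp add: power2_eq_square field_simps)+
    then show "((\<lambda>x::real. (2*x-1)^3/12 + x/2) has_vector_derivative ((2*x - 1)^2 + 1) / 2) (at x within {0..1})"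
      by (simp add: has_real_derivative_iff_has_vector_derivative has_vector_derivative_at_within)
  qed simp
  then have "((\<lambda>x::real. ((2*x - 1)^2 + 1) / 2) has_integral 2/3) {0..1::real}" by simp
  then show ?thesis by (rule integral_unique)
qed

lemma integral_linear_interpolation:
  "integral {0..1} (\<lambda>x::real. (1 - x) * c1 + x * c2) = (c1 + c2) / 2"
proof -
  have "((\<lambda>x::real. (1 - x) * c1 + x * c2) has_integral
        (((1 - 1^2/2) * c1 + 1^2/2 * c2) - ((0 - 0^2/2) * c1 + 0^2/2 * c2))) {0..1::real}"
  proof (rule fundamental_theorem_of_calculus)
    fix x :: real
    have "((\<lambda>x::real. (x - x^2/2) * c1 + x^2/2 * c2) has_real_derivative (1 - x) * c1 + x * c2) (at x)"
      by (auto intro!: derivative_eq_intros simp: algebra_simps)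
    then show "((\<lambda>x::real. (x - x^2/2) * c1 + x^2/2 * c2) has_vector_derivative (1 - x) * c1 + x * c2) (at x within {0..1})"
      by (simp add: has_real_derivative_iff_has_vector_derivative has_vector_derivative_at_within)
  qed simp
  then show ?thesis by (simp add: integral_unique)
qed

lemma sum_integrals_uniform_partition:
  fixes f :: "real \<Rightarrow> real"
  assumes "continuous_on {0..1} f" "n \<le> N"
  shows "(\<Sum>j<n. integral {real j / real N .. real (Suc j) / real N} f) = integral {0 .. real n / real N} f"
  using assms(2)
proof (induction n)
  case (Suc n)
  have "f integrable_on {0 .. real (Suc n) / real N}"
    by (rule integrable_on_subinterval[OF integrable_continuous_interval[OF assms(1)]])
       (use Suc.prems in auto)
  then have "integral {0 .. real n / real N} f + integral {real n / real N .. real (Suc n) / real N} f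
      = integral {0 .. real (Suc n) / real N} f"
    by (intro Henstock_Kurzweil_Integration.integral_combine) (auto simp: divide_right_mono)
  then show ?case using Suc by simp
qed simp

lemma right_riemann_sum_le_integral:
  fixes f :: "real \<Rightarrow> real"
  assumes lip: "K-lipschitz_on {0..1} f"
  shows "(\<Sum>j<N. f (real (Suc j) / real N)) \<le> real N * integral {0..1} f + K"
proof (cases "N = 0")
  case True
  then show ?thesis using lipschitz_on_nonneg[OF lip] by simp
next
  case False
  have cont: "continuous_on {0..1} f" using lipschitz_on_continuous_on[OF lip] .
  have piece: "f hi / real N \<le> integral {lo..hi} f + K / real N / real N"
    if "lo = real j / real N" "hi = real (Suc j) / real N" "j < N" for j lo hi
  proof -
    have "hi \<le> 1" using that by (simp add: divide_le_eq_1)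
    then have lohi: "0 \<le> lo" "lo \<le> hi" "hi \<le> 1" "hi - lo = 1 / real N"
      using that False by (auto simp: divide_right_mono add_divide_distrib)
    have "integral {lo..hi} (\<lambda>x. f hi - K / real N) \<le> integral {lo..hi} f"
    proof (rule integral_le)
      show "f integrable_on {lo..hi}"
        by (rule integrable_on_subinterval[OF integrable_continuous_interval[OF cont]]) (use lohi in auto)
    next
      fix x assume x: "x \<in> {lo..hi}"
      have "\<bar>f hi - f x\<bar> \<le> K * \<bar>hi - x\<bar>"
        using lipschitz_onD[OF lip, of hi x] x lohi by (simp add: dist_real_def)
      also have "\<dots> \<le> K / real N"
        using x lohi lipschitz_on_nonneg[OF lip] mult_left_mono[of "\<bar>hi - x\<bar>" "1 / real N" K] by simp
      finally show "f hi - K / real N \<le> f x" by (simp add: abs_le_iff)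
    qed (rule integrable_continuous_interval, rule continuous_on_const)
    then show ?thesis using lohi by (simp add: diff_divide_distrib)
  qed
  have "(\<Sum>j<N. f (real (Suc j) / real N) / real N)
      \<le> (\<Sum>j<N. integral {real j / real N .. real (Suc j) / real N} f + K / real N / real N)"
    by (intro sum_mono piece) auto
  also have "\<dots> = integral {0..1} f + K / real N"
    using sum_integrals_uniform_partition[OF cont, of N N] False by (simp add: sum.distrib)
  finally show ?thesis
    using False by (simp add: sum_divide_distrib[symmetric] field_simps)
qed

lemma THE_root_of_strict_mono:
  fixes f :: "real \<Rightarrow> real"
  assumes "strict_mono_on U f" "continuous_on {a..b} f" "{a..b} \<subseteq> U" "a \<le> b" "f a \<le> y" "y \<le> f b"
    and P: "\<And>x. P x \<longleftrightarrow> x \<in> U \<and> f x = y"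
  shows "(THE x. P x) \<in> {a..b} \<and> f (THE x. P x) = y"
proof -
  obtain x where x: "a \<le> x" "x \<le> b" "f x = y"
    using IVT'[of f a y b] assms by blast
  have "(THE x. P x) = x"
  proof (rule the_equality)
    show "P x" using x assms(3) P by auto
  next
    fix x' assume "P x'"
    then show "x' = x" using x assms(1,3) P strict_mono_on_eqD[of U f x x'] by auto
  qed
  then show ?thesis using x by simp
qed

lemma sum_prod_lists_length_eq:
  fixes f :: "nat \<Rightarrow> 'a \<Rightarrow> 'b::comm_semiring_1"
  assumes "finite K"
  shows "(\<Sum>ks\<in>{ks. set ks \<subseteq> K \<and> length ks = N}. \<Prod>i<N. f i (ks ! i)) = (\<Prod>i<N. \<Sum>k\<in>K. f i k)"
proof (induction N arbitrary: f)
  case 0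
  have "{ks. set ks \<subseteq> K \<and> length ks = 0} = {[]}" by auto
  then show ?case by simp
next
  case (Suc N)
  let ?L = "{ks. set ks \<subseteq> K \<and> length ks = N}"
  have inj: "inj_on (\<lambda>(xs, n). n # xs) (?L \<times> K)" by (auto simp: inj_on_def)
  have "(\<Sum>ks\<in>{ks. set ks \<subseteq> K \<and> length ks = Suc N}. \<Prod>i<Suc N. f i (ks ! i))
      = (\<Sum>(xs, n)\<in>?L \<times> K. \<Prod>i<Suc N. f i ((n # xs) ! i))"
    unfolding lists_length_Suc_eq by (subst sum.reindex[OF inj]) (simp add: case_prod_unfold)
  also have "\<dots> = (\<Sum>(xs, n)\<in>?L \<times> K. f 0 n * (\<Prod>i<N. f (Suc i) (xs ! i)))"
    by (rule sum.cong[OF refl]) (clarsimp simp del: prod.lessThan_Suc simp add: prod.lessThan_Suc_shift)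
  also have "\<dots> = (\<Sum>n\<in>K. f 0 n) * (\<Sum>xs\<in>?L. \<Prod>i<N. f (Suc i) (xs ! i))"
    by (simp add: sum.cartesian_product[symmetric] sum_distrib_left sum_distrib_right sum.swap[of _ K] mult.commute)
  also have "\<dots> = (\<Prod>i<Suc N. \<Sum>k\<in>K. f i k)"
    using Suc.IH[of "\<lambda>i. f (Suc i)"] by (simp only: prod.lessThan_Suc_shift)
  finally show ?case .
qed

lemma abs_add_mult_le_max:
  fixes a s x :: real
  assumes "0 \<le> x" "x \<le> 1"
  shows "\<bar>a + s * x\<bar> \<le> max (\<bar>a\<bar>) (\<bar>a + s\<bar>)"
proof -
  have "\<bar>a + s * x\<bar> = \<bar>(1 - x) * a + x * (a + s)\<bar>" by (simp add: algebra_simps)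
  also have "\<dots> \<le> \<bar>(1 - x) * a\<bar> + \<bar>x * (a + s)\<bar>" by (rule abs_triangle_ineq)
  also have "\<dots> = (1 - x) * \<bar>a\<bar> + x * \<bar>a + s\<bar>" using assms by (simp add: abs_mult)
  also have "\<dots> \<le> (1 - x) * max (\<bar>a\<bar>) (\<bar>a + s\<bar>) + x * max (\<bar>a\<bar>) (\<bar>a + s\<bar>)"
    using assms by (intro add_mono mult_left_mono) auto
  finally show ?thesis by (simp add: algebra_simps)
qed

section \<open>The log-moment generating function\<close>

definition geom_ratio :: "real \<Rightarrow> real" where
  "geom_ratio \<beta> = exp (- \<beta> / 2)"

lemma geom_ratio_pos: "geom_ratio \<beta> > 0"
  by (simp add: geom_ratio_def)

lemma geom_ratio_less_1: "\<beta> > 0 \<Longrightarrow> geom_ratio \<beta> < 1"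
  by (simp add: geom_ratio_def)

lemma geom_ratio_mult_exp_less_1: "u < \<beta>/2 \<Longrightarrow> geom_ratio \<beta> * exp u < 1"
  by (simp add: geom_ratio_def mult_exp_exp)

lemma one_minus_geom_ratio_mult_exp_pos:
  "\<bar>u\<bar> < \<beta>/2 \<Longrightarrow> 0 < 1 - geom_ratio \<beta> * exp u \<and> 0 < 1 - geom_ratio \<beta> * exp (-u)"
  using geom_ratio_mult_exp_less_1[of u \<beta>] geom_ratio_mult_exp_less_1[of "-u" \<beta>]
  by (simp add: abs_less_iff)

lemma c_beta_eq: "c_beta \<beta> = (1 + geom_ratio \<beta>) / (1 - geom_ratio \<beta>)"
  by (simp add: c_beta_def geom_ratio_def)

lemma c_beta_pos: "\<beta> > 0 \<Longrightarrow> c_beta \<beta> > 0"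
  using geom_ratio_pos[of \<beta>] geom_ratio_less_1[of \<beta>] by (simp add: c_beta_eq)

lemma P_beta_nonneg: "\<beta> > 0 \<Longrightarrow> P_beta \<beta> k \<ge> 0"
  unfolding P_beta_def by (intro divide_nonneg_pos c_beta_pos) auto

lemma P_beta_mult_exp_nonneg_int:
  "k \<ge> 0 \<Longrightarrow> P_beta \<beta> k * exp (h * real_of_int k) = (geom_ratio \<beta> * exp h) ^ nat k / c_beta \<beta>"
proof -
  assume k: "k \<ge> 0"
  have "(geom_ratio \<beta> * exp h) ^ nat k = exp (real (nat k) * (- \<beta>/2 + h))"
    by (simp add: geom_ratio_def exp_of_nat_mult[symmetric] mult_exp_exp algebra_simps)
  also have "\<dots> = exp (- \<beta> * \<bar>real_of_int k\<bar> / 2) * exp (h * real_of_int k)"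
    using k by (simp add: mult_exp_exp algebra_simps)
  finally show ?thesis by (simp add: P_beta_def)
qed

lemma P_beta_mult_exp_neg_int:
  "P_beta \<beta> (- int n - 1) * exp (h * real_of_int (- int n - 1))
     = (geom_ratio \<beta> * exp (-h)) ^ Suc n / c_beta \<beta>"
proof -
  have "(geom_ratio \<beta> * exp (-h)) ^ Suc n = exp (real (Suc n) * (- \<beta>/2 - h))"
    by (simp only: geom_ratio_def power_mult_distrib exp_of_nat_mult[symmetric] mult_exp_exp)
       (simp add: algebra_simps)
  also have "\<dots> = exp (- \<beta> * \<bar>real_of_int (- int n - 1)\<bar> / 2) * exp (h * real_of_int (- int n - 1))"
    by (simp add: mult_exp_exp algebra_simps)
  finally show ?thesis by (simp add: P_beta_def)
qed

lemma has_sum_P_beta_mult_exp_nonneg_int: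
  assumes "\<beta> > 0" "h < \<beta>/2"
  shows "((\<lambda>k. P_beta \<beta> k * exp (h * real_of_int k)) has_sum
           (1 / (1 - geom_ratio \<beta> * exp h) / c_beta \<beta>)) (range int)"
proof -
  define x where "x = geom_ratio \<beta> * exp h"
  have x: "0 < x" "x < 1"
    using assms geom_ratio_mult_exp_less_1 geom_ratio_pos by (auto simp: x_def)
  have "((\<lambda>n. x ^ n / c_beta \<beta>) has_sum (1 / (1 - x) / c_beta \<beta>)) UNIV"
    using x c_beta_pos[OF assms(1)]
    by (intro sums_nonneg_imp_has_sum sums_divide geometric_sums) auto
  moreover have "P_beta \<beta> (int n) * exp (h * real_of_int (int n)) = x ^ n / c_beta \<beta>" for n
    using P_beta_mult_exp_nonneg_int[of "int n" \<beta> h] by (simp add: x_def)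
  ultimately show ?thesis
    unfolding x_def[symmetric] by (subst has_sum_reindex) (simp_all add: o_def)
qed

lemma has_sum_P_beta_mult_exp_neg_int:
  assumes "\<beta> > 0" "-h < \<beta>/2"
  shows "((\<lambda>k. P_beta \<beta> k * exp (h * real_of_int k)) has_sum
           (geom_ratio \<beta> * exp (-h) / (1 - geom_ratio \<beta> * exp (-h)) / c_beta \<beta>))
         (range (\<lambda>n. - int n - 1))"
proof -
  define y where "y = geom_ratio \<beta> * exp (-h)"
  have y: "0 < y" "y < 1"
    using assms geom_ratio_mult_exp_less_1 geom_ratio_pos by (auto simp: y_def)
  have "(\<lambda>n. y * y ^ n) sums (y * (1 / (1 - y)))"
    using y by (intro sums_mult geometric_sums) auto
  then have "((\<lambda>n. y ^ Suc n / c_beta \<beta>) has_sum (y / (1 - y) / c_beta \<beta>)) UNIV"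
    using y c_beta_pos[OF assms(1)] by (intro sums_nonneg_imp_has_sum sums_divide) auto
  moreover have "P_beta \<beta> (- int n - 1) * exp (h * real_of_int (- int n - 1)) = y ^ Suc n / c_beta \<beta>" for n
    using P_beta_mult_exp_neg_int[of \<beta> n h] by (simp add: y_def)
  ultimately show ?thesis
    unfolding y_def[symmetric] by (subst has_sum_reindex) (simp_all add: inj_on_def o_def)
qed

lemma has_sum_P_beta_mult_exp:
  assumes "\<beta> > 0" "\<bar>h\<bar> < \<beta>/2"
  shows "((\<lambda>k. P_beta \<beta> k * exp (h * real_of_int k)) has_sum
     ((1 - geom_ratio \<beta>)^2 / ((1 - geom_ratio \<beta> * exp h) * (1 - geom_ratio \<beta> * exp (-h))))) UNIV"
proof -
  define r where "r = geom_ratio \<beta>"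
  define x where "x = r * exp h"
  define y where "y = r * exp (-h)"
  have r: "0 < r" "r < 1" using assms geom_ratio_pos geom_ratio_less_1 by (auto simp: r_def)
  have xy: "x < 1" "y < 1" "x * y = r^2"
    using assms geom_ratio_mult_exp_less_1[of h \<beta>] geom_ratio_mult_exp_less_1[of "-h" \<beta>]
    by (auto simp: x_def y_def r_def power2_eq_square mult_exp_exp)
  have UNIV_split: "range int \<union> range (\<lambda>n. - int n - 1) = (UNIV :: int set)"
  proof -
    have "k \<in> range int \<union> range (\<lambda>n. - int n - 1)" for k :: int
    proof (cases "k \<ge> 0")
      case True then show ?thesis by (auto intro!: image_eqI[of _ _ "nat k"])
    next
      case False then show ?thesis by (auto intro!: image_eqI[of _ _ "nat (-k-1)"])
    qed
    then show ?thesis by auto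
  qed
  have "range int \<inter> range (\<lambda>n. - int n - 1) = {}" by auto
  from has_sum_Un_disjoint[OF has_sum_P_beta_mult_exp_nonneg_int has_sum_P_beta_mult_exp_neg_int this]
  have "((\<lambda>k. P_beta \<beta> k * exp (h * real_of_int k)) has_sum
         (1 / (1 - x) / c_beta \<beta> + y / (1 - y) / c_beta \<beta>)) UNIV"
    using assms UNIV_split by (simp add: x_def y_def r_def)
  moreover have "1 / (1 - x) / c_beta \<beta> + y / (1 - y) / c_beta \<beta> = (1 - r)^2 / ((1 - x) * (1 - y))"
    using r xy by (simp add: c_beta_eq r_def[symmetric] divide_simps) (simp add: algebra_simps power2_eq_square)
  ultimately show ?thesis by (simp add: x_def y_def r_def)
qed

definition log_mgf :: "real \<Rightarrow> real \<Rightarrow> real" where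
  "log_mgf \<beta> u = 2 * ln (1 - geom_ratio \<beta>)
     - ln (1 - geom_ratio \<beta> * exp u) - ln (1 - geom_ratio \<beta> * exp (-u))"

definition log_mgf_deriv :: "real \<Rightarrow> real \<Rightarrow> real" where
  "log_mgf_deriv \<beta> u = geom_ratio \<beta> * exp u / (1 - geom_ratio \<beta> * exp u)
     - geom_ratio \<beta> * exp (-u) / (1 - geom_ratio \<beta> * exp (-u))"

lemma exp_log_mgf:
  assumes "\<beta> > 0" "\<bar>h\<bar> < \<beta>/2"
  shows "exp (log_mgf \<beta> h)
    = (1 - geom_ratio \<beta>)^2 / ((1 - geom_ratio \<beta> * exp h) * (1 - geom_ratio \<beta> * exp (-h)))"
proof -
  have pos: "0 < 1 - geom_ratio \<beta> * exp h" "0 < 1 - geom_ratio \<beta> * exp (-h)" "0 < 1 - geom_ratio \<beta>"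
    using assms geom_ratio_mult_exp_less_1[of h \<beta>] geom_ratio_mult_exp_less_1[of "-h" \<beta>]
      geom_ratio_less_1[of \<beta>] by auto
  moreover have "2 * ln (1 - geom_ratio \<beta>) = ln ((1 - geom_ratio \<beta>)^2)"
    using pos by (simp add: ln_realpow)
  ultimately show ?thesis
    by (simp add: log_mgf_def exp_diff)
qed

lemma LL_eq_log_mgf:
  assumes "\<beta> > 0" "\<bar>u\<bar> < \<beta>/2"
  shows "LL \<beta> u = log_mgf \<beta> u"
  unfolding LL_def infsumI[OF has_sum_P_beta_mult_exp[OF assms]] exp_log_mgf[OF assms, symmetric]
  by simp

lemma sum_P_beta_mult_exp_le_exp_log_mgf:
  assumes "\<beta> > 0" "\<bar>h\<bar> < \<beta>/2" "finite K"
  shows "(\<Sum>k\<in>K. P_beta \<beta> k * exp (h * real_of_int k)) \<le> exp (log_mgf \<beta> h)"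
  unfolding exp_log_mgf[OF assms(1,2)]
  by (rule finite_sum_le_has_sum[OF has_sum_P_beta_mult_exp[OF assms(1,2)] assms(3)])
     (auto intro!: mult_nonneg_nonneg P_beta_nonneg assms(1))

lemma log_mgf_has_real_derivative:
  assumes "\<bar>u\<bar> < \<beta>/2"
  shows "(log_mgf \<beta> has_real_derivative log_mgf_deriv \<beta> u) (at u)"
proof -
  have "0 < 1 - geom_ratio \<beta> * exp u" "0 < 1 - geom_ratio \<beta> * exp (-u)"
    using one_minus_geom_ratio_mult_exp_pos[OF assms] by auto
  then show ?thesis
    unfolding log_mgf_def[abs_def] log_mgf_deriv_def
    by (auto intro!: derivative_eq_intros simp: divide_simps)
qed

lemma log_mgf_compose_has_real_derivative:
  assumes "(g has_real_derivative g') (at t within S)" "\<bar>g t\<bar> < \<beta>/2"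
  shows "((\<lambda>t. log_mgf \<beta> (g t)) has_real_derivative log_mgf_deriv \<beta> (g t) * g') (at t within S)"
  using DERIV_chain2[OF log_mgf_has_real_derivative[OF assms(2)] assms(1)] .

lemma log_mgf_even: "log_mgf \<beta> (-u) = log_mgf \<beta> u"
  by (simp add: log_mgf_def)

lemma log_mgf_deriv_odd: "log_mgf_deriv \<beta> (-u) = - log_mgf_deriv \<beta> u"
  by (simp add: log_mgf_deriv_def)

lemma log_mgf_0 [simp]: "log_mgf \<beta> 0 = 0"
  by (simp add: log_mgf_def)

lemma log_mgf_deriv_0 [simp]: "log_mgf_deriv \<beta> 0 = 0"
  by (simp add: log_mgf_deriv_def)

lemma log_mgf_deriv_strict_mono: "strict_mono_on {u. \<bar>u\<bar> < \<beta>/2} (log_mgf_deriv \<beta>)"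
proof (rule strict_mono_onI)
  have frac_mono: "t1 / (1 - t1) < t2 / (1 - t2)" if "0 < t1" "t1 < t2" "t2 < 1" for t1 t2 :: real
    using that by (simp add: divide_simps) (simp add: algebra_simps)
  fix u v assume "u \<in> {u. \<bar>u\<bar> < \<beta>/2}" "v \<in> {u. \<bar>u\<bar> < \<beta>/2}" "u < v"
  then show "log_mgf_deriv \<beta> u < log_mgf_deriv \<beta> v"
    unfolding log_mgf_deriv_def using geom_ratio_pos[of \<beta>]
      geom_ratio_mult_exp_less_1[of v \<beta>] geom_ratio_mult_exp_less_1[of "-u" \<beta>]
    by (intro diff_strict_mono frac_mono) (auto simp: abs_less_iff)
qed

lemma log_mgf_deriv_mono:
  "\<bar>u\<bar> < \<beta>/2 \<Longrightarrow> \<bar>v\<bar> < \<beta>/2 \<Longrightarrow> u \<le> v \<Longrightarrow> log_mgf_deriv \<beta> u \<le> log_mgf_deriv \<beta> v"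
  using strict_mono_on_leD[OF log_mgf_deriv_strict_mono] by simp

lemma log_mgf_deriv_nonneg: "0 \<le> m \<Longrightarrow> m < \<beta>/2 \<Longrightarrow> 0 \<le> log_mgf_deriv \<beta> m"
  using log_mgf_deriv_mono[of 0 \<beta> m] by simp

lemma abs_log_mgf_deriv_le:
  assumes "\<bar>u\<bar> \<le> m" "m < \<beta>/2"
  shows "\<bar>log_mgf_deriv \<beta> u\<bar> \<le> log_mgf_deriv \<beta> m"
proof -
  have "log_mgf_deriv \<beta> u \<le> log_mgf_deriv \<beta> m"
    by (rule log_mgf_deriv_mono) (use assms in auto)
  moreover have "log_mgf_deriv \<beta> (-m) \<le> log_mgf_deriv \<beta> u"
    by (rule log_mgf_deriv_mono) (use assms in auto)
  ultimately show ?thesis by (simp add: log_mgf_deriv_odd abs_le_iff)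
qed

lemma continuous_on_log_mgf_deriv: "continuous_on {u. \<bar>u\<bar> < \<beta>/2} (log_mgf_deriv \<beta>)"
proof (rule continuous_at_imp_continuous_on, intro ballI)
  fix u assume "u \<in> {u. \<bar>u\<bar> < \<beta>/2}"
  then have "1 - geom_ratio \<beta> * exp u \<noteq> 0" "1 - geom_ratio \<beta> * exp (-u) \<noteq> 0"
    using one_minus_geom_ratio_mult_exp_pos[of u \<beta>] by auto
  then show "isCont (log_mgf_deriv \<beta>) u"
    unfolding log_mgf_deriv_def[abs_def] by (intro continuous_intros)
qed

lemma continuous_on_log_mgf: "continuous_on {u. \<bar>u\<bar> < \<beta>/2} (log_mgf \<beta>)"
  using log_mgf_has_real_derivative DERIV_isCont by (blast intro: continuous_at_imp_continuous_on)

lemma log_mgf_convex: "convex_on {u. \<bar>u\<bar> < \<beta>/2} (log_mgf \<beta>)"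
proof (rule convex_on_realI[where f'="log_mgf_deriv \<beta>"])
  have "{u. \<bar>u\<bar> < \<beta>/2} = {-\<beta>/2<..<\<beta>/2}" by auto
  then show "connected {u. \<bar>u\<bar> < \<beta>/2}" by simp
qed (use log_mgf_has_real_derivative log_mgf_deriv_mono in auto)

lemma log_mgf_nonneg: "\<bar>u\<bar> < \<beta>/2 \<Longrightarrow> log_mgf \<beta> u \<ge> 0"
  using convex_onD[OF log_mgf_convex[of \<beta>], of "1/2" u "-u"] by (simp add: log_mgf_even)

lemma log_mgf_mult_le: "\<bar>u\<bar> < \<beta>/2 \<Longrightarrow> 0 \<le> t \<Longrightarrow> t \<le> 1 \<Longrightarrow> log_mgf \<beta> (t * u) \<le> t * log_mgf \<beta> u"
  using convex_onD[OF log_mgf_convex[of \<beta>], of t 0 u] by simp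

lemma log_mgf_lipschitz:
  assumes "0 \<le> m" "m < \<beta>/2"
  shows "(log_mgf_deriv \<beta> m)-lipschitz_on {-m..m} (log_mgf \<beta>)"
proof (rule lipschitz_on_leI)
  fix x y assume xy: "x \<in> {-m..m}" "y \<in> {-m..m}" "x \<le> y"
  show "dist (log_mgf \<beta> x) (log_mgf \<beta> y) \<le> log_mgf_deriv \<beta> m * dist x y"
  proof (cases "x = y")
    case False
    have "\<And>t. x \<le> t \<Longrightarrow> t \<le> y \<Longrightarrow> (log_mgf \<beta> has_real_derivative log_mgf_deriv \<beta> t) (at t)"
      using xy assms by (intro log_mgf_has_real_derivative) auto
    then obtain z where z: "x < z" "z < y" "log_mgf \<beta> y - log_mgf \<beta> x = (y - x) * log_mgf_deriv \<beta> z"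
      using MVT2[of x y] xy False by force
    have "\<bar>log_mgf_deriv \<beta> z\<bar> \<le> log_mgf_deriv \<beta> m"
      using z xy assms by (intro abs_log_mgf_deriv_le) auto
    then show ?thesis
      using z by (simp add: dist_real_def abs_minus_commute[of "log_mgf \<beta> x"] abs_mult mult.commute mult_left_mono)
  qed simp
next
  show "0 \<le> log_mgf_deriv \<beta> m"
    using assms by (rule log_mgf_deriv_nonneg)
qed

lemma log_mgf_ge:
  assumes "0 \<le> u" "u < \<beta>/2"
  shows "2 * ln (1 - geom_ratio \<beta>) - ln (1 - geom_ratio \<beta> * exp u) \<le> log_mgf \<beta> u"
proof -
  have "0 < geom_ratio \<beta> * exp (-u)" "geom_ratio \<beta> * exp (-u) < 1"
    using geom_ratio_pos[of \<beta>] geom_ratio_mult_exp_less_1[of "-u" \<beta>] assms by auto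
  then show ?thesis by (simp add: log_mgf_def)
qed

lemma log_mgf_unbounded:
  assumes "\<beta> > 0" "u0 < \<beta>/2"
  shows "\<exists>u. u0 < u \<and> 0 < u \<and> u < \<beta>/2 \<and> log_mgf \<beta> u \<ge> M"
proof -
  define r where "r = geom_ratio \<beta>"
  have r: "0 < r" "r < 1" using assms geom_ratio_pos geom_ratio_less_1 by (auto simp: r_def)
  define v0 where "v0 = max u0 0"
  have v0: "r * exp v0 < 1" using geom_ratio_mult_exp_less_1[of v0 \<beta>] assms by (auto simp: r_def v0_def)
  \<comment> \<open>Choose \<open>u\<close> with \<open>1 - r e\<^sup>u = e\<^sup>-\<^sup>K\<close> for a large \<open>K\<close>.\<close>
  define K where "K = max (M - 2 * ln (1 - r)) (1 - ln (1 - r * exp v0))"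
  have eK: "exp (-K) < 1 - r * exp v0"
  proof -
    have "exp (-K) \<le> exp (ln (1 - r * exp v0) - 1)" unfolding K_def by simp
    also have "\<dots> < exp (ln (1 - r * exp v0))" by simp
    also have "\<dots> = 1 - r * exp v0" using v0 by simp
    finally show ?thesis .
  qed
  define u where "u = ln ((1 - exp (-K)) / r)"
  have "0 < r * exp v0" using r by simp
  then have "0 < 1 - exp (-K)" using eK by linarith
  then have ru: "r * exp u = 1 - exp (-K)"
    unfolding u_def using r by simp
  then have "r * exp v0 < r * exp u" using eK by simp
  then have "v0 < u" using r by simp
  moreover have "u < \<beta>/2"
  proof -
    have "exp (u - \<beta>/2) < 1" using ru by (simp add: r_def geom_ratio_def mult_exp_exp)
    then show ?thesis by simp
  qed
  moreover have "M \<le> log_mgf \<beta> u"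
    using log_mgf_ge[of u \<beta>] \<open>v0 < u\<close> \<open>u < \<beta>/2\<close> ru
    unfolding r_def[symmetric] K_def by (simp add: v0_def)
  ultimately show ?thesis unfolding v0_def by auto
qed

section \<open>Integrals along affine paths\<close>

definition affine_integral :: "real \<Rightarrow> real \<Rightarrow> real \<Rightarrow> real \<Rightarrow> real" where
  "affine_integral \<beta> p a s = integral {0..1} (\<lambda>x. log_mgf \<beta> (s * (x - p) + a))"

definition affine_integral_deriv :: "real \<Rightarrow> real \<Rightarrow> real \<Rightarrow> real \<Rightarrow> real" where
  "affine_integral_deriv \<beta> p a s = integral {0..1} (\<lambda>x. (x - p) * log_mgf_deriv \<beta> (s * (x - p) + a))"

definition affine_admissible :: "real \<Rightarrow> real \<Rightarrow> real \<Rightarrow> real set \<Rightarrow> bool" where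
  "affine_admissible \<beta> p a U \<longleftrightarrow> (\<forall>s\<in>U. \<forall>x\<in>{0..1}. \<bar>s * (x - p) + a\<bar> < \<beta>/2)"

lemma affine_admissibleD:
  "affine_admissible \<beta> p a U \<Longrightarrow> s \<in> U \<Longrightarrow> x \<in> {0..1} \<Longrightarrow> \<bar>s * (x - p) + a\<bar> < \<beta>/2"
  by (simp add: affine_admissible_def)

lemma continuous_on_affine_integrand:
  "affine_admissible \<beta> p a {s} \<Longrightarrow> continuous_on {0..1} (\<lambda>x. log_mgf \<beta> (s * (x - p) + a))"
  by (rule continuous_on_compose2[OF continuous_on_log_mgf], intro continuous_intros)
     (auto simp: affine_admissible_def)

lemma continuous_on_affine_deriv_integrand:
  "affine_admissible \<beta> p a {s} \<Longrightarrow>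
     continuous_on {0..1} (\<lambda>x. (x - p) * log_mgf_deriv \<beta> (s * (x - p) + a))"
  by (intro continuous_intros continuous_on_compose2[OF continuous_on_log_mgf_deriv])
     (auto simp: affine_admissible_def)

lemma continuous_on_affine_deriv_integrand2:
  assumes "affine_admissible \<beta> p a U"
  shows "continuous_on (U \<times> {0..1}) (\<lambda>(s, x). (x - p) * log_mgf_deriv \<beta> (s * (x - p) + a))"
proof -
  have "continuous_on (U \<times> {0..1}) (\<lambda>z. log_mgf_deriv \<beta> (fst z * (snd z - p) + a))"
    by (rule continuous_on_compose2[OF continuous_on_log_mgf_deriv], intro continuous_intros)
       (use assms in \<open>auto simp: affine_admissible_def\<close>)
  then show ?thesis
    unfolding case_prod_beta by (intro continuous_intros)
qed

lemma affine_admissible_subset: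
  "affine_admissible \<beta> p a U \<Longrightarrow> V \<subseteq> U \<Longrightarrow> affine_admissible \<beta> p a V"
  by (auto simp: affine_admissible_def)

lemma affine_integral_has_real_derivative:
  assumes "open U" "convex U" "affine_admissible \<beta> p a U" "s \<in> U"
  shows "(affine_integral \<beta> p a has_real_derivative affine_integral_deriv \<beta> p a s) (at s)"
proof -
  have "((\<lambda>s. integral (cbox 0 1) (\<lambda>x. log_mgf \<beta> (s * (x - p) + a))) has_field_derivative
      integral (cbox 0 1) (\<lambda>x. (x - p) * log_mgf_deriv \<beta> (s * (x - p) + a))) (at s within U)"
  proof (rule leibniz_rule_field_derivative)
    fix s x :: real assume "s \<in> U" "x \<in> cbox 0 1"
    then have "\<bar>s * (x - p) + a\<bar> < \<beta>/2" using assms(3) by (simp add: affine_admissible_def)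
    then have "((\<lambda>s. log_mgf \<beta> (s * (x - p) + a)) has_real_derivative
           log_mgf_deriv \<beta> (s * (x - p) + a) * (x - p)) (at s within U)"
      by (intro log_mgf_compose_has_real_derivative) (auto intro!: derivative_eq_intros)
    then show "((\<lambda>s. log_mgf \<beta> (s * (x - p) + a)) has_real_derivative
           (x - p) * log_mgf_deriv \<beta> (s * (x - p) + a)) (at s within U)"
      by (simp add: mult.commute)
  next
    fix s assume "s \<in> U"
    then have "affine_admissible \<beta> p a {s}" using assms(3) affine_admissible_subset by blast
    then show "(\<lambda>x. log_mgf \<beta> (s * (x - p) + a)) integrable_on cbox 0 1"
      using integrable_continuous_interval[OF continuous_on_affine_integrand] by simp
  qed (use assms continuous_on_affine_deriv_integrand2[OF assms(3)] in auto)
  then show ?thesis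
    unfolding affine_integral_def[abs_def] affine_integral_deriv_def cbox_interval
      at_within_open[OF assms(4,1)] .
qed

lemma continuous_on_affine_integral_deriv:
  assumes "affine_admissible \<beta> p a U"
  shows "continuous_on U (affine_integral_deriv \<beta> p a)"
  unfolding affine_integral_deriv_def[abs_def]
  using integral_continuous_on_param[of U 0 1 "\<lambda>s x. (x - p) * log_mgf_deriv \<beta> (s * (x - p) + a)"]
    continuous_on_affine_deriv_integrand2[OF assms] by simp

lemma affine_integral_deriv_strict_mono:
  assumes "affine_admissible \<beta> p a U"
  shows "strict_mono_on U (affine_integral_deriv \<beta> p a)"
proof (rule strict_mono_onI)
  fix s1 s2 assume s: "s1 \<in> U" "s2 \<in> U" "s1 < s2"
  then have adm: "affine_admissible \<beta> p a {s1}" "affine_admissible \<beta> p a {s2}"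
    using assms affine_admissible_subset by blast+
  show "affine_integral_deriv \<beta> p a s1 < affine_integral_deriv \<beta> p a s2"
    unfolding affine_integral_deriv_def
  proof (rule integral_less_real_except_point[where p=p])
    fix x :: real assume x: "x \<in> {0..1}" "x \<noteq> p"
    have dom: "s1 * (x - p) + a \<in> {u. \<bar>u\<bar> < \<beta>/2}" "s2 * (x - p) + a \<in> {u. \<bar>u\<bar> < \<beta>/2}"
      using adm x by (auto simp: affine_admissible_def)
    \<comment> \<open>Both factors change sign at \<open>x = p\<close>, so the integrand increases with \<open>s\<close> on either side.\<close>
    consider "x > p" | "x < p" using x by linarith
    then show "(x - p) * log_mgf_deriv \<beta> (s1 * (x - p) + a) < (x - p) * log_mgf_deriv \<beta> (s2 * (x - p) + a)"
    proof cases
      case 1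
      then show ?thesis
        using s strict_mono_onD[OF log_mgf_deriv_strict_mono dom] by simp
    next
      case 2
      then have "s2 * (x - p) + a < s1 * (x - p) + a" using s by (simp add: mult_strict_right_mono_neg)
      then show ?thesis
        using 2 strict_mono_onD[OF log_mgf_deriv_strict_mono dom(2,1)] by (simp add: mult_strict_left_mono_neg)
    qed
  qed (use adm continuous_on_affine_deriv_integrand in auto)
qed

lemma affine_integral_by_parts:
  assumes "affine_admissible \<beta> p a {s}"
  shows "s * affine_integral_deriv \<beta> p a s
    = (1 - p) * log_mgf \<beta> (s * (1 - p) + a) + p * log_mgf \<beta> (a - s * p) - affine_integral \<beta> p a s"
proof -
  define F where "F x = (x - p) * log_mgf \<beta> (s * (x - p) + a)" for x
  define f where "f x = log_mgf \<beta> (s * (x - p) + a) + s * ((x - p) * log_mgf_deriv \<beta> (s * (x - p) + a))" for x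
  have "(f has_integral (F 1 - F 0)) {0..1}"
  proof (rule fundamental_theorem_of_calculus)
    fix x :: real assume "x \<in> {0..1}"
    then have "\<bar>s * (x - p) + a\<bar> < \<beta>/2" using assms by (simp add: affine_admissible_def)
    then have "((\<lambda>x. log_mgf \<beta> (s * (x - p) + a)) has_real_derivative log_mgf_deriv \<beta> (s * (x - p) + a) * s) (at x)"
      by (intro log_mgf_compose_has_real_derivative) (auto intro!: derivative_eq_intros)
    then have "(F has_real_derivative f x) (at x)"
      unfolding F_def f_def by (auto intro!: derivative_eq_intros simp: algebra_simps)
    then show "(F has_vector_derivative f x) (at x within {0..1})"
      by (simp add: has_real_derivative_iff_has_vector_derivative has_vector_derivative_at_within)
  qed simp
  moreover have "(f has_integral (affine_integral \<beta> p a s + s * affine_integral_deriv \<beta> p a s)) {0..1}"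
    unfolding f_def affine_integral_def affine_integral_deriv_def
    by (intro has_integral_add has_integral_mult_right integrable_integral integrable_continuous_interval
        continuous_on_affine_integrand continuous_on_affine_deriv_integrand assms)
  ultimately have "F 1 - F 0 = affine_integral \<beta> p a s + s * affine_integral_deriv \<beta> p a s"
    using has_integral_unique by blast
  then show ?thesis unfolding F_def by (simp add: algebra_simps)
qed

section \<open>The functions G and H\<close>

lemma affine_admissible_GG: "affine_admissible \<beta> (1/2) 0 {-\<beta><..<\<beta>}"
  unfolding affine_admissible_def
proof (intro ballI)
  fix s x :: real assume "s \<in> {-\<beta><..<\<beta>}" "x \<in> {0..1}"
  then have "\<bar>s\<bar> < \<beta>" "\<bar>x - 1/2\<bar> \<le> 1/2" by (auto simp: abs_if)
  then have "\<bar>s\<bar> * \<bar>x - 1/2\<bar> \<le> \<bar>s\<bar> * (1/2)" by (intro mult_left_mono) auto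
  then show "\<bar>s * (x - 1/2) + 0\<bar> < \<beta>/2" using \<open>\<bar>s\<bar> < \<beta>\<close> by (simp add: abs_mult)
qed

lemma affine_admissible_HH:
  assumes "0 < \<delta>" "\<delta> < \<beta>"
  shows "affine_admissible \<beta> 0 (\<delta> - \<beta>/2) {-\<delta><..<\<beta> - \<delta>}"
  unfolding affine_admissible_def
proof (intro ballI)
  fix s x :: real assume s: "s \<in> {-\<delta><..<\<beta> - \<delta>}" and "x \<in> {0..1}"
  then have "\<bar>(\<delta> - \<beta>/2) + s * x\<bar> \<le> max (\<bar>\<delta> - \<beta>/2\<bar>) (\<bar>\<delta> - \<beta>/2 + s\<bar>)"
    by (intro abs_add_mult_le_max) auto
  also have "\<dots> < \<beta>/2" unfolding max_less_iff_conj abs_less_iff using s assms by auto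
  finally show "\<bar>s * (x - 0) + (\<delta> - \<beta>/2)\<bar> < \<beta>/2" by (simp add: add.commute)
qed

lemma GG_eq_affine_integral:
  assumes "\<beta> > 0" "\<bar>h\<bar> < \<beta>"
  shows "GG \<beta> h = affine_integral \<beta> (1/2) 0 h"
  unfolding GG_def affine_integral_def
proof (rule integral_cong)
  fix x :: real assume "x \<in> {0..1}"
  then have "\<bar>h * (x - 1/2) + 0\<bar> < \<beta>/2"
    using affine_admissibleD[OF affine_admissible_GG[of \<beta>], of h x] assms by (auto simp: abs_less_iff)
  then show "LL \<beta> (h * (x - 1/2)) = log_mgf \<beta> (h * (x - 1/2) + 0)"
    using LL_eq_log_mgf[OF assms(1)] by simp
qed

lemma HH_eq_affine_integral:
  assumes "0 < \<delta>" "\<delta> < \<beta>" "-\<delta> < s" "s < \<beta> - \<delta>"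
  shows "HH \<beta> \<delta> s = affine_integral \<beta> 0 (\<delta> - \<beta>/2) s"
  unfolding HH_def affine_integral_def
proof (rule integral_cong)
  fix x :: real assume "x \<in> {0..1}"
  then have "\<bar>s * (x - 0) + (\<delta> - \<beta>/2)\<bar> < \<beta>/2"
    using affine_admissibleD[OF affine_admissible_HH[OF assms(1,2)], of s x] assms by auto
  moreover have "\<beta> > 0" using assms by simp
  ultimately show "LL \<beta> (s * x + \<delta> - \<beta>/2) = log_mgf \<beta> (s * (x - 0) + (\<delta> - \<beta>/2))"
    using LL_eq_log_mgf by (simp add: algebra_simps)
qed

lemma deriv_GG:
  assumes "\<beta> > 0" "\<bar>h\<bar> < \<beta>"
  shows "deriv (GG \<beta>) h = affine_integral_deriv \<beta> (1/2) 0 h"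
proof -
  have h: "h \<in> {-\<beta><..<\<beta>}" using assms by auto
  have "(affine_integral \<beta> (1/2) 0 has_real_derivative affine_integral_deriv \<beta> (1/2) 0 h) (at h)"
    by (rule affine_integral_has_real_derivative[OF _ _ affine_admissible_GG h]) auto
  then have "(GG \<beta> has_real_derivative affine_integral_deriv \<beta> (1/2) 0 h) (at h)"
    by (rule has_field_derivative_transform_within_open[where S="{-\<beta><..<\<beta>}"])
       (use h GG_eq_affine_integral[OF assms(1)] in auto)
  then show ?thesis by (rule DERIV_imp_deriv)
qed

lemma deriv_HH:
  assumes "0 < \<delta>" "\<delta> < \<beta>" "-\<delta> < s" "s < \<beta> - \<delta>"
  shows "deriv (HH \<beta> \<delta>) s = affine_integral_deriv \<beta> 0 (\<delta> - \<beta>/2) s"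
proof -
  have s: "s \<in> {-\<delta><..<\<beta> - \<delta>}" using assms by auto
  have "(affine_integral \<beta> 0 (\<delta> - \<beta>/2) has_real_derivative affine_integral_deriv \<beta> 0 (\<delta> - \<beta>/2) s) (at s)"
    by (rule affine_integral_has_real_derivative[OF _ _ affine_admissible_HH[OF assms(1,2)] s]) auto
  then have "(HH \<beta> \<delta> has_real_derivative affine_integral_deriv \<beta> 0 (\<delta> - \<beta>/2) s) (at s)"
    by (rule has_field_derivative_transform_within_open[where S="{-\<delta><..<\<beta> - \<delta>}"])
       (use s HH_eq_affine_integral[OF assms(1,2)] in auto)
  then show ?thesis by (rule DERIV_imp_deriv)
qed

lemma affine_integral_GG_le:
  assumes "0 \<le> h" "h < \<beta>"
  shows "affine_integral \<beta> (1/2) 0 h \<le> 2/3 * log_mgf \<beta> (h/2)"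
proof -
  have dom: "\<bar>h/2\<bar> < \<beta>/2" using assms by auto
  have "affine_integral \<beta> (1/2) 0 h \<le> integral {0..1} (\<lambda>x. ((2*x - 1)^2 + 1) / 2 * log_mgf \<beta> (h/2))"
    unfolding affine_integral_def
  proof (rule integral_le)
    show "(\<lambda>x. log_mgf \<beta> (h * (x - 1/2) + 0)) integrable_on {0..1}"
      using affine_admissible_subset[OF affine_admissible_GG[of \<beta>], where V="{h}"] assms
      by (intro integrable_continuous_interval continuous_on_affine_integrand) auto
  next
    fix x :: real assume x: "x \<in> {0..1}"
    define t where "t = \<bar>2*x - 1\<bar>"
    have t: "0 \<le> t" "t \<le> 1" using x by (auto simp: t_def)
    \<comment> \<open>By evenness and convexity \<open>L(h(x - 1/2)) = L(t h/2) \<le> t L(h/2)\<close>, and \<open>t \<le> (t\<^sup>2 + 1)/2\<close>.\<close>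
    have "log_mgf \<beta> (h * (x - 1/2) + 0) = log_mgf \<beta> (t * (h/2))"
      using log_mgf_even[of \<beta> "t * (h/2)"] by (cases "2*x - 1 \<ge> 0") (auto simp: t_def algebra_simps)
    also have "\<dots> \<le> t * log_mgf \<beta> (h/2)" by (rule log_mgf_mult_le[OF dom t])
    also have "\<dots> \<le> ((2*x - 1)^2 + 1) / 2 * log_mgf \<beta> (h/2)"
    proof (rule mult_right_mono[OF _ log_mgf_nonneg[OF dom]])
      have "t^2 = (2*x-1)^2" "0 \<le> (t - 1)^2" by (simp_all add: t_def)
      then show "t \<le> ((2*x - 1)^2 + 1) / 2" by (simp add: power2_eq_square algebra_simps)
    qed
    finally show "log_mgf \<beta> (h * (x - 1/2) + 0) \<le> ((2*x - 1)^2 + 1) / 2 * log_mgf \<beta> (h/2)" .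
  qed (intro integrable_continuous_interval continuous_intros; simp)
  also have "\<dots> = 2/3 * log_mgf \<beta> (h/2)"
    using integral_quadratic_weight
      integral_mult_left[where f="\<lambda>x::real. ((2*x - 1)^2 + 1) / 2" and S="{0..1}" and c="log_mgf \<beta> (h/2)"]
    by simp
  finally show ?thesis .
qed

lemma log_mgf_le_mult_deriv_GG:
  assumes "0 \<le> h" "h < \<beta>"
  shows "log_mgf \<beta> (h/2) / 3 \<le> h * affine_integral_deriv \<beta> (1/2) 0 h"
proof -
  have "affine_admissible \<beta> (1/2) 0 {h}"
    using affine_admissible_subset[OF affine_admissible_GG[of \<beta>], where V="{h}"] assms by auto
  from affine_integral_by_parts[OF this]
  have "h * affine_integral_deriv \<beta> (1/2) 0 h = log_mgf \<beta> (h/2) - affine_integral \<beta> (1/2) 0 h"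
    using log_mgf_even[of \<beta> "h/2"] by simp
  then show ?thesis using affine_integral_GG_le[OF assms] by simp
qed

lemma affine_integral_HH_le:
  assumes "0 < \<delta>" "\<delta> < \<beta>" "-\<delta> < s" "s < \<beta> - \<delta>"
  shows "affine_integral \<beta> 0 (\<delta> - \<beta>/2) s \<le> (log_mgf \<beta> (\<delta> - \<beta>/2) + log_mgf \<beta> (s + (\<delta> - \<beta>/2))) / 2"
proof -
  define a where "a = \<delta> - \<beta>/2"
  have adm: "affine_admissible \<beta> 0 a {s}"
    using affine_admissible_subset[OF affine_admissible_HH[OF assms(1,2)], where V="{s}"] assms by (auto simp: a_def)
  have dom: "\<bar>a\<bar> < \<beta>/2" "\<bar>s + a\<bar> < \<beta>/2"
    using affine_admissibleD[OF adm, of s 0] affine_admissibleD[OF adm, of s 1] by auto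
  have "affine_integral \<beta> 0 a s \<le> integral {0..1} (\<lambda>x. (1 - x) * log_mgf \<beta> a + x * log_mgf \<beta> (s + a))"
    unfolding affine_integral_def
  proof (rule integral_le)
    fix x :: real assume x: "x \<in> {0..1}"
    have "(1 - x) *\<^sub>R a + x *\<^sub>R (s + a) = s * (x - 0) + a" by (simp add: algebra_simps)
    then show "log_mgf \<beta> (s * (x - 0) + a) \<le> (1 - x) * log_mgf \<beta> a + x * log_mgf \<beta> (s + a)"
      using convex_onD[OF log_mgf_convex[of \<beta>], of x a "s + a"] x dom by simp
  next
    show "(\<lambda>x. log_mgf \<beta> (s * (x - 0) + a)) integrable_on {0..1}"
      using adm by (intro integrable_continuous_interval continuous_on_affine_integrand)
  qed (intro integrable_continuous_interval continuous_intros)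
  also have "\<dots> = (log_mgf \<beta> a + log_mgf \<beta> (s + a)) / 2" by (rule integral_linear_interpolation)
  finally show ?thesis unfolding a_def .
qed

lemma log_mgf_increment_le_mult_deriv_HH:
  assumes "0 < \<delta>" "\<delta> < \<beta>" "0 < s" "s < \<beta> - \<delta>"
  shows "(log_mgf \<beta> (s + (\<delta> - \<beta>/2)) - log_mgf \<beta> (\<delta> - \<beta>/2)) / 2 \<le> s * affine_integral_deriv \<beta> 0 (\<delta> - \<beta>/2) s"
proof -
  have "affine_admissible \<beta> 0 (\<delta> - \<beta>/2) {s}"
    using affine_admissible_subset[OF affine_admissible_HH[OF assms(1,2)], where V="{s}"] assms by auto
  from affine_integral_by_parts[OF this]
  have "s * affine_integral_deriv \<beta> 0 (\<delta> - \<beta>/2) s = log_mgf \<beta> (s + (\<delta> - \<beta>/2)) - affine_integral \<beta> 0 (\<delta> - \<beta>/2) s"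
    by simp
  then show ?thesis using affine_integral_HH_le[OF assms(1,2) _ assms(4)] assms(1,3) by simp
qed

lemma integral_log_mgf_deriv_centered:
  assumes "\<bar>s\<bar> < \<beta>"
  shows "integral {0..1} (\<lambda>x. log_mgf_deriv \<beta> (s * (x - 1/2))) = 0"
proof (cases "s = 0")
  case False
  define F where "F x = log_mgf \<beta> (s * (x - 1/2)) / s" for x
  have "((\<lambda>x. log_mgf_deriv \<beta> (s * (x - 1/2))) has_integral (F 1 - F 0)) {0..1}"
  proof (rule fundamental_theorem_of_calculus)
    fix x :: real assume "x \<in> {0..1}"
    then have "\<bar>s * (x - 1/2)\<bar> < \<beta>/2"
      using affine_admissibleD[OF affine_admissible_GG[of \<beta>], of s x] assms by (auto simp: abs_less_iff)
    then have "((\<lambda>x. log_mgf \<beta> (s * (x - 1/2))) has_real_derivative log_mgf_deriv \<beta> (s * (x - 1/2)) * s) (at x)"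
      by (intro log_mgf_compose_has_real_derivative) (auto intro!: derivative_eq_intros)
    then have "(F has_real_derivative log_mgf_deriv \<beta> (s * (x - 1/2)) * s / s) (at x)"
      unfolding F_def by (rule DERIV_cdivide)
    then have "(F has_real_derivative log_mgf_deriv \<beta> (s * (x - 1/2))) (at x)"
      using False by simp
    then show "(F has_vector_derivative log_mgf_deriv \<beta> (s * (x - 1/2))) (at x within {0..1})"
      by (simp add: has_real_derivative_iff_has_vector_derivative has_vector_derivative_at_within)
  qed simp
  moreover have "F 1 - F 0 = 0"
    using log_mgf_even[of \<beta> "s/2"] by (simp add: F_def algebra_simps)
  ultimately show ?thesis by (simp add: integral_unique)
qed simp

text \<open>At \<open>s = \<beta> - 2\<delta>\<close> the affine path of \<open>H\<^sub>\<delta>\<close> coincides with that of \<open>G\<close>, so their slopes agree there.\<close>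

lemma affine_integral_deriv_HH_eq_GG:
  assumes "0 < \<delta>" "\<delta> < \<beta>"
  shows "affine_integral_deriv \<beta> 0 (\<delta> - \<beta>/2) (\<beta> - 2*\<delta>) = affine_integral_deriv \<beta> (1/2) 0 (\<beta> - 2*\<delta>)"
proof -
  define s where "s = \<beta> - 2*\<delta>"
  define f where "f = (\<lambda>x. log_mgf_deriv \<beta> (s * (x - 1/2)))"
  have adm: "affine_admissible \<beta> (1/2) 0 {s}"
    using affine_admissible_subset[OF affine_admissible_GG[of \<beta>], where V="{s}"] assms by (auto simp: s_def)
  have cont: "continuous_on {0..1} f"
    unfolding f_def using adm
    by (intro continuous_on_compose2[OF continuous_on_log_mgf_deriv] continuous_intros)
       (auto simp: affine_admissible_def)
  have "affine_integral_deriv \<beta> 0 (\<delta> - \<beta>/2) s = integral {0..1} (\<lambda>x. (x - 1/2) * f x + 1/2 * f x)"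
    unfolding affine_integral_deriv_def f_def
    by (rule integral_cong) (simp add: s_def algebra_simps)
  also have "\<dots> = affine_integral_deriv \<beta> (1/2) 0 s + 1/2 * integral {0..1} f"
    using continuous_on_affine_deriv_integrand[OF adm] cont
    by (subst integral_add) (auto simp: affine_integral_deriv_def f_def intro: integrable_continuous_interval)
  also have "integral {0..1} f = 0"
    unfolding f_def using assms by (intro integral_log_mgf_deriv_centered) (simp add: s_def abs_if)
  finally show ?thesis by (simp add: s_def)
qed

section \<open>The roots h_tilde and s_delta\<close>

lemma affine_integral_deriv_GG_unbounded:
  assumes "\<beta> > 0" "q > 0"
  shows "\<exists>h. 0 < h \<and> h < \<beta> \<and> q \<le> affine_integral_deriv \<beta> (1/2) 0 h"
proof -
  obtain u where u: "0 < u" "u < \<beta>/2" "log_mgf \<beta> u \<ge> 3 * \<beta> * q"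
    using log_mgf_unbounded[OF assms(1), of 0 "3 * \<beta> * q"] assms by auto
  define h where "h = 2 * u"
  have h: "0 < h" "h < \<beta>" using u by (auto simp: h_def)
  have "\<beta> * q \<le> h * affine_integral_deriv \<beta> (1/2) 0 h"
    using log_mgf_le_mult_deriv_GG[of h \<beta>] h u by (simp add: h_def)
  moreover have "h * q < \<beta> * q" using h assms by simp
  ultimately have "h * q \<le> h * affine_integral_deriv \<beta> (1/2) 0 h" by linarith
  then show ?thesis using h by auto
qed

lemma h_tilde_root:
  assumes "\<beta> > 0" "q > 0"
  shows "0 \<le> h_tilde \<beta> q \<and> h_tilde \<beta> q < \<beta> \<and> affine_integral_deriv \<beta> (1/2) 0 (h_tilde \<beta> q) = q"
proof -
  define G' where "G' = affine_integral_deriv \<beta> (1/2) 0"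
  obtain h where h: "0 < h" "h < \<beta>" and Gh: "q \<le> G' h"
    using affine_integral_deriv_GG_unbounded[OF assms] by (auto simp: G'_def)
  have G0: "G' 0 \<le> q" using assms by (simp add: G'_def affine_integral_deriv_def)
  have mono: "strict_mono_on {0..<\<beta>} G'"
    unfolding G'_def
    by (intro affine_integral_deriv_strict_mono affine_admissible_subset[OF affine_admissible_GG]) auto
  have cont: "continuous_on {0..h} G'"
    unfolding G'_def using h
    by (intro continuous_on_affine_integral_deriv affine_admissible_subset[OF affine_admissible_GG[of \<beta>]]) auto
  have sub: "{0..h} \<subseteq> {0..<\<beta>}" using h by auto
  have P: "0 \<le> h' \<and> h' < \<beta> \<and> deriv (GG \<beta>) h' = q \<longleftrightarrow> h' \<in> {0..<\<beta>} \<and> G' h' = q" for h'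
    using deriv_GG[OF assms(1), of h'] by (auto simp: G'_def)
  from THE_root_of_strict_mono[OF mono cont sub less_imp_le[OF h(1)] G0 Gh P] h
  show ?thesis unfolding h_tilde_def G'_def by auto
qed

lemma h_tilde_mono:
  assumes "\<beta> > 0" "0 < q" "q \<le> q'"
  shows "h_tilde \<beta> q \<le> h_tilde \<beta> q'"
proof -
  have "strict_mono_on {-\<beta><..<\<beta>} (affine_integral_deriv \<beta> (1/2) 0)"
    by (rule affine_integral_deriv_strict_mono[OF affine_admissible_GG])
  then show ?thesis
    using h_tilde_root[OF assms(1,2)] h_tilde_root[OF assms(1), of q'] assms
    by (auto simp: strict_mono_on_less_eq[symmetric])
qed

lemma delta0_antimono: "\<beta> > 0 \<Longrightarrow> 0 < q \<Longrightarrow> q \<le> q' \<Longrightarrow> delta0 \<beta> q' \<le> delta0 \<beta> q"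
  using h_tilde_mono by (simp add: delta0_def)

lemma affine_integral_deriv_HH_unbounded:
  assumes "0 < \<delta>" "\<delta> < \<beta>" "0 < q"
  shows "\<exists>s. \<beta> - 2*\<delta> < s \<and> s < \<beta> - \<delta> \<and> q \<le> affine_integral_deriv \<beta> 0 (\<delta> - \<beta>/2) s"
proof -
  define a where "a = \<delta> - \<beta>/2"
  have "max a (\<beta>/2 - \<delta>) < \<beta>/2" using assms by (simp add: a_def max_def)
  then obtain u where u: "max a (\<beta>/2 - \<delta>) < u" "u < \<beta>/2" "log_mgf \<beta> u \<ge> log_mgf \<beta> a + 2 * \<beta> * q"
    using log_mgf_unbounded[of \<beta>] assms by fastforce
  define s where "s = u - a"
  have s: "0 < s" "\<beta> - 2*\<delta> < s" "s < \<beta> - \<delta>" using u by (auto simp: s_def a_def)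
  have "\<beta> * q \<le> s * affine_integral_deriv \<beta> 0 a s"
    using log_mgf_increment_le_mult_deriv_HH[OF assms(1,2) s(1,3)] u by (simp add: a_def s_def)
  moreover have "s * q < \<beta> * q" using s assms by simp
  ultimately have "s * q \<le> s * affine_integral_deriv \<beta> 0 a s" by linarith
  then show ?thesis using s by (auto simp: a_def)
qed

lemma s_delta_root:
  assumes "0 < \<delta>" "\<delta> < \<beta>" "0 < q" "delta0 \<beta> q < \<delta>"
  shows "\<beta> - 2*\<delta> \<le> s_delta \<beta> \<delta> q \<and> s_delta \<beta> \<delta> q < \<beta> - \<delta>
           \<and> affine_integral_deriv \<beta> 0 (\<delta> - \<beta>/2) (s_delta \<beta> \<delta> q) = q"
proof -
  define H' where "H' = affine_integral_deriv \<beta> 0 (\<delta> - \<beta>/2)"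
  define s1 where "s1 = \<beta> - 2*\<delta>"
  have \<beta>: "\<beta> > 0" using assms by simp
  have "H' s1 = affine_integral_deriv \<beta> (1/2) 0 s1"
    unfolding H'_def s1_def by (rule affine_integral_deriv_HH_eq_GG[OF assms(1,2)])
  also have "\<dots> \<le> affine_integral_deriv \<beta> (1/2) 0 (h_tilde \<beta> q)"
    using strict_mono_on_leD[OF affine_integral_deriv_strict_mono[OF affine_admissible_GG[of \<beta>]], of s1 "h_tilde \<beta> q"]
      assms h_tilde_root[OF \<beta> assms(3)] by (auto simp: s1_def delta0_def)
  finally have Hs1: "H' s1 \<le> q" using h_tilde_root[OF \<beta> assms(3)] by simp
  obtain s2 where s2: "s1 < s2" "s2 < \<beta> - \<delta>" and Hs2: "q \<le> H' s2"
    using affine_integral_deriv_HH_unbounded[OF assms(1-3)] by (auto simp: H'_def s1_def)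
  have mono: "strict_mono_on {-\<delta><..<\<beta> - \<delta>} H'"
    unfolding H'_def by (rule affine_integral_deriv_strict_mono[OF affine_admissible_HH[OF assms(1,2)]])
  have sub: "{s1..s2} \<subseteq> {-\<delta><..<\<beta> - \<delta>}" using s2 assms by (auto simp: s1_def)
  have cont: "continuous_on {s1..s2} H'"
    unfolding H'_def using sub
    by (intro continuous_on_affine_integral_deriv affine_admissible_subset[OF affine_admissible_HH[OF assms(1,2)]])
  have P: "-\<delta> < s \<and> s < \<beta> - \<delta> \<and> deriv (HH \<beta> \<delta>) s = q \<longleftrightarrow> s \<in> {-\<delta><..<\<beta> - \<delta>} \<and> H' s = q" for s
    using deriv_HH[OF assms(1,2), of s] by (auto simp: H'_def)
  from THE_root_of_strict_mono[OF mono cont sub less_imp_le[OF s2(1)] Hs1 Hs2 P] s2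
  show ?thesis unfolding s_delta_def H'_def s1_def by auto
qed

lemma s_delta_mono:
  assumes "0 < \<delta>" "\<delta> < \<beta>" "0 < q" "q \<le> q'" "delta0 \<beta> q < \<delta>"
  shows "s_delta \<beta> \<delta> q \<le> s_delta \<beta> \<delta> q'"
proof -
  have "delta0 \<beta> q' < \<delta>" using delta0_antimono[of \<beta> q q'] assms by simp
  then have "s_delta \<beta> \<delta> q' \<in> {-\<delta><..<\<beta> - \<delta>}"
    "affine_integral_deriv \<beta> 0 (\<delta> - \<beta>/2) (s_delta \<beta> \<delta> q') = q'"
    using s_delta_root[OF assms(1,2), of q'] assms by auto
  moreover have "s_delta \<beta> \<delta> q \<in> {-\<delta><..<\<beta> - \<delta>}"
    "affine_integral_deriv \<beta> 0 (\<delta> - \<beta>/2) (s_delta \<beta> \<delta> q) = q"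
    using s_delta_root[OF assms(1,2,3,5)] assms by auto
  ultimately show ?thesis
    using strict_mono_on_less_eq[OF affine_integral_deriv_strict_mono[OF affine_admissible_HH[OF assms(1,2)]]]
      assms(4) by metis
qed

section \<open>Paths of the walk\<close>

lemma path_prob_eq_prod_nth: "path_prob \<beta> ks = (\<Prod>i<length ks. P_beta \<beta> (ks ! i))"
  unfolding path_prob_def prod.list_conv_set_nth by (simp add: atLeast0LessThan)

lemma path_prob_nonneg: "\<beta> > 0 \<Longrightarrow> path_prob \<beta> ks \<ge> 0"
  unfolding path_prob_eq_prod_nth by (intro prod_nonneg P_beta_nonneg) auto

lemma walk_X_eq_sum_nth: "i \<le> length ks \<Longrightarrow> walk_X ks i = (\<Sum>j<i. ks ! j)"
  unfolding walk_X_def by (simp add: sum_list_sum_nth atLeast0LessThan)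

lemma walk_X_Suc: "i < length ks \<Longrightarrow> walk_X ks (Suc i) = walk_X ks i + ks ! i"
  using walk_X_eq_sum_nth[of i ks] walk_X_eq_sum_nth[of "Suc i" ks] by simp

lemma sum_walk_X_eq_weighted_sum:
  "n \<le> length ks \<Longrightarrow> (\<Sum>j=0..n. walk_X ks j) = (\<Sum>i<n. int (n - i) * ks ! i)"
proof (induction n)
  case 0 then show ?case by (simp add: walk_X_def)
next
  case (Suc n)
  have "(\<Sum>i<Suc n. int (Suc n - i) * ks ! i) = (\<Sum>i<Suc n. int (n - i) * ks ! i + ks ! i)"
    by (rule sum.cong) (auto simp: algebra_simps Suc_diff_le)
  then have "(\<Sum>i<Suc n. int (Suc n - i) * ks ! i) = (\<Sum>i<n. int (n - i) * ks ! i) + (\<Sum>i<Suc n. ks ! i)"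
    by (simp add: sum.distrib)
  then show ?case using Suc walk_X_eq_sum_nth[of "Suc n" ks] by simp
qed

lemma walk_A_eq_weighted_sum: "length ks = N \<Longrightarrow> walk_A ks N = (\<Sum>i<N. int (N - i) * ks ! i)"
  unfolding walk_A_def using sum_walk_X_eq_weighted_sum by simp

definition positive_paths :: "nat \<Rightarrow> real \<Rightarrow> int list set" where
  "positive_paths N q = {ks. length ks = N \<and> real_of_int (walk_A ks N) = q * real N ^ 2
                          \<and> (\<forall>i. 0 < i \<and> i \<le> N \<longrightarrow> walk_X ks i > 0)}"

lemma walk_X_nonneg_positive_paths:
  "ks \<in> positive_paths N q \<Longrightarrow> j \<le> N \<Longrightarrow> walk_X ks j \<ge> 0"
  by (cases "j = 0") (auto simp: positive_paths_def walk_X_def less_imp_le)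

text \<open>On the event every position, hence every step, is bounded by the area \<open>A\<^sub>N = q N\<^sup>2\<close>.\<close>

lemma positive_paths_steps_bounded:
  assumes "ks \<in> positive_paths N q"
  shows "set ks \<subseteq> {- \<lceil>q * real N ^ 2\<rceil> .. \<lceil>q * real N ^ 2\<rceil>}"
proof
  fix k assume "k \<in> set ks"
  then obtain i where i: "i < N" "ks ! i = k" using assms by (auto simp: positive_paths_def in_set_conv_nth)
  have X_le: "0 \<le> walk_X ks j \<and> walk_X ks j \<le> \<lceil>q * real N ^ 2\<rceil>" if "j \<le> N" for j
  proof -
    have "walk_X ks j \<le> walk_A ks N"
      unfolding walk_A_def using that walk_X_nonneg_positive_paths[OF assms]
      by (intro member_le_sum) auto
    moreover have "real_of_int (walk_A ks N) \<le> real_of_int \<lceil>q * real N ^ 2\<rceil>"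
      using assms le_of_int_ceiling[of "q * real N ^ 2"] by (simp add: positive_paths_def)
    ultimately show ?thesis using walk_X_nonneg_positive_paths[OF assms that] of_int_le_iff by fastforce
  qed
  have "k = walk_X ks (Suc i) - walk_X ks i"
    using walk_X_Suc[of i ks] i assms by (simp add: positive_paths_def)
  then show "k \<in> {- \<lceil>q * real N ^ 2\<rceil> .. \<lceil>q * real N ^ 2\<rceil>}"
    using X_le[of i] X_le[of "Suc i"] i by auto
qed

lemma finite_positive_paths: "finite (positive_paths N q)"
proof (rule finite_subset)
  show "positive_paths N q \<subseteq> {ks. set ks \<subseteq> {- \<lceil>q * real N ^ 2\<rceil> .. \<lceil>q * real N ^ 2\<rceil>} \<and> length ks = N}"
    using positive_paths_steps_bounded by (auto simp: positive_paths_def)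
qed (rule finite_lists_length_eq, simp)

lemma DD_eq_sum_positive_paths:
  "DD \<beta> N q \<delta> = (\<Sum>ks\<in>positive_paths N q. path_prob \<beta> ks * exp ((\<delta> - \<beta>/2) * real_of_int (walk_X ks N)))"
  unfolding DD_def positive_paths_def[symmetric] by (rule infsum_finite[OF finite_positive_paths])

section \<open>Exponential tilting\<close>

lemma tilt_sum_positive_paths:
  assumes "ks \<in> positive_paths N q"
  shows "(\<Sum>i<N. (b + s * real (N - i) / real N) * real_of_int (ks ! i))
           = b * real_of_int (walk_X ks N) + s * q * real N"
proof -
  have len: "length ks = N" using assms by (simp add: positive_paths_def)
  have X: "real_of_int (walk_X ks N) = (\<Sum>i<N. real_of_int (ks ! i))"
    using walk_X_eq_sum_nth[of N ks] len by simp
  have A: "(\<Sum>i<N. real (N - i) * real_of_int (ks ! i)) = q * real N ^ 2"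
    using assms walk_A_eq_weighted_sum[OF len] by (simp add: positive_paths_def)
  have "(\<Sum>i<N. (b + s * real (N - i) / real N) * real_of_int (ks ! i))
      = b * (\<Sum>i<N. real_of_int (ks ! i)) + s / real N * (\<Sum>i<N. real (N - i) * real_of_int (ks ! i))"
  proof -
    have "(b + s * r / real N) * k = b * k + s / real N * (r * k)" for r k :: real
      by (simp add: algebra_simps)
    then show ?thesis by (simp only: sum.distrib sum_distrib_left)
  qed
  also have "\<dots> = b * real_of_int (walk_X ks N) + s * q * real N"
    unfolding X A by (cases "N = 0") (auto simp: power2_eq_square)
  finally show ?thesis .
qed

lemma path_weight_le_tilted_product:
  assumes "\<beta> > 0" "\<delta> - \<beta>/2 \<le> b" "ks \<in> positive_paths N q"
  shows "path_prob \<beta> ks * exp ((\<delta> - \<beta>/2) * real_of_int (walk_X ks N))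
    \<le> exp (- s * q * real N) *
       (\<Prod>i<N. P_beta \<beta> (ks ! i) * exp ((b + s * real (N - i) / real N) * real_of_int (ks ! i)))"
proof -
  define tilt where "tilt i = b + s * real (N - i) / real N" for i
  have len: "length ks = N" using assms by (simp add: positive_paths_def)
  have "path_prob \<beta> ks * exp ((\<delta> - \<beta>/2) * real_of_int (walk_X ks N))
      \<le> path_prob \<beta> ks * exp (b * real_of_int (walk_X ks N))"
    using walk_X_nonneg_positive_paths[OF assms(3), of N] path_prob_nonneg[OF assms(1)] assms(2)
    by (intro mult_left_mono) (auto intro!: mult_right_mono)
  also have "\<dots> = path_prob \<beta> ks * exp ((\<Sum>i<N. tilt i * real_of_int (ks ! i)) - s * q * real N)"
    using tilt_sum_positive_paths[OF assms(3), of b s] by (simp add: tilt_def)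
  also have "\<dots> = exp (- s * q * real N) * (\<Prod>i<N. P_beta \<beta> (ks ! i) * exp (tilt i * real_of_int (ks ! i)))"
    by (simp add: path_prob_eq_prod_nth len exp_diff exp_sum prod.distrib exp_minus field_simps)
  finally show ?thesis by (simp add: tilt_def)
qed

text \<open>Exponential Chebyshev bound with the step-dependent tilt \<open>\<lambda>\<^sub>i = b + s (N - i)/N\<close>: since
  \<open>A\<^sub>N = \<Sum>\<^sub>i (N - i) k\<^sub>i\<close>, the tilt produces \<open>e\<^sup>s\<^sup>q\<^sup>N\<close> on the event, and \<open>X\<^sub>N \<ge> 0\<close> absorbs \<open>b \<ge> \<delta> - \<beta>/2\<close>.\<close>

lemma DD_le_prod_exp_log_mgf:
  assumes "\<beta> > 0" "\<delta> - \<beta>/2 \<le> b" "\<forall>i<N. \<bar>b + s * real (N - i) / real N\<bar> < \<beta>/2"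
  shows "DD \<beta> N q \<delta> \<le> exp (- s * q * real N) * (\<Prod>i<N. exp (log_mgf \<beta> (b + s * real (N - i) / real N)))"
proof -
  define tilt where "tilt i = b + s * real (N - i) / real N" for i
  define K where "K = {- \<lceil>q * real N ^ 2\<rceil> .. \<lceil>q * real N ^ 2\<rceil>}"
  define T where "T ks = exp (- s * q * real N) * (\<Prod>i<N. P_beta \<beta> (ks ! i) * exp (tilt i * real_of_int (ks ! i)))" for ks
  define B where "B = {ks. set ks \<subseteq> K \<and> length ks = N}"
  have sub: "positive_paths N q \<subseteq> B"
    using positive_paths_steps_bounded by (auto simp: B_def K_def positive_paths_def)
  have "DD \<beta> N q \<delta> \<le> sum T (positive_paths N q)"
    unfolding DD_eq_sum_positive_paths T_def tilt_def
    by (intro sum_mono path_weight_le_tilted_product assms(1,2))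
  also have "\<dots> \<le> sum T B"
  proof (rule sum_mono2[OF _ sub])
    show "finite B" unfolding B_def K_def by (rule finite_lists_length_eq) simp
    show "0 \<le> T ks" for ks
      unfolding T_def using P_beta_nonneg[OF assms(1)] by (auto intro!: prod_nonneg mult_nonneg_nonneg)
  qed
  also have "sum T B = exp (- s * q * real N) * (\<Prod>i<N. \<Sum>k\<in>K. P_beta \<beta> k * exp (tilt i * real_of_int k))"
    unfolding T_def B_def sum_distrib_left[symmetric]
    using sum_prod_lists_length_eq[of K "\<lambda>i k. P_beta \<beta> k * exp (tilt i * real_of_int k)" N]
    by (simp add: K_def)
  also have "\<dots> \<le> exp (- s * q * real N) * (\<Prod>i<N. exp (log_mgf \<beta> (tilt i)))"
    using assms P_beta_nonneg[OF assms(1)]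
    by (intro mult_left_mono prod_mono conjI sum_nonneg sum_P_beta_mult_exp_le_exp_log_mgf)
       (auto simp: tilt_def K_def)
  finally show ?thesis by (simp add: tilt_def)
qed

lemma log_mgf_affine_lipschitz:
  assumes "0 \<le> m" "m < \<beta>/2" "\<forall>x\<in>{0..1}. \<bar>b + s * x\<bar> \<le> m"
  shows "(log_mgf_deriv \<beta> m * \<bar>s\<bar>)-lipschitz_on {0..1} (\<lambda>x. log_mgf \<beta> (b + s * x))"
proof (rule lipschitz_onI)
  fix x y :: real assume "x \<in> {0..1}" "y \<in> {0..1}"
  then have "\<bar>b + s * x\<bar> \<le> m" "\<bar>b + s * y\<bar> \<le> m" using assms(3) by auto
  then have "dist (log_mgf \<beta> (b + s * x)) (log_mgf \<beta> (b + s * y)) \<le> log_mgf_deriv \<beta> m * dist (b + s * x) (b + s * y)"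
    by (intro lipschitz_onD[OF log_mgf_lipschitz[OF assms(1,2)]]) (auto simp: abs_le_iff)
  also have "dist (b + s * x) (b + s * y) = \<bar>s\<bar> * dist x y"
    by (simp add: dist_real_def abs_mult[symmetric] algebra_simps)
  finally show "dist (log_mgf \<beta> (b + s * x)) (log_mgf \<beta> (b + s * y)) \<le> log_mgf_deriv \<beta> m * \<bar>s\<bar> * dist x y"
    by (simp add: mult.assoc)
qed (use log_mgf_deriv_nonneg assms in auto)

lemma DD_le_exp_integral:
  assumes "\<beta> > 0" "\<delta> - \<beta>/2 \<le> b" "0 \<le> m" "m < \<beta>/2" and dom: "\<forall>x\<in>{0..1}. \<bar>b + s * x\<bar> \<le> m"
  shows "DD \<beta> N q \<delta>
    \<le> exp (log_mgf_deriv \<beta> m * \<bar>s\<bar>) * exp (real N * (integral {0..1} (\<lambda>x. log_mgf \<beta> (b + s * x)) - s * q))"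
proof -
  have "\<forall>i<N. \<bar>b + s * real (N - i) / real N\<bar> < \<beta>/2"
  proof (intro allI impI)
    fix i assume "i < N"
    then have "real (N - i) / real N \<in> {0..1}" by auto
    then have "\<bar>b + s * (real (N - i) / real N)\<bar> \<le> m" using dom by blast
    then show "\<bar>b + s * real (N - i) / real N\<bar> < \<beta>/2" using assms(4) by simp
  qed
  from DD_le_prod_exp_log_mgf[OF assms(1,2) this]
  have "DD \<beta> N q \<delta> \<le> exp (- s * q * real N + (\<Sum>i<N. log_mgf \<beta> (b + s * real (N - i) / real N)))"
    by (simp only: exp_add exp_sum[OF finite_lessThan])
  also have "(\<Sum>i<N. log_mgf \<beta> (b + s * real (N - i) / real N)) = (\<Sum>j<N. log_mgf \<beta> (b + s * (real (Suc j) / real N)))"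
    by (rule sum.nat_diff_reindex[symmetric, THEN trans]) (auto intro!: sum.cong simp: Suc_diff_Suc)
  also have "\<dots> \<le> real N * integral {0..1} (\<lambda>x. log_mgf \<beta> (b + s * x)) + log_mgf_deriv \<beta> m * \<bar>s\<bar>"
    by (rule right_riemann_sum_le_integral[OF log_mgf_affine_lipschitz[OF assms(3,4) dom]])
  finally show ?thesis
    by (simp add: exp_add[symmetric] algebra_simps)
qed


lemma s_delta_regime_bounds:
  assumes "\<beta> > 0" "\<delta> < \<beta>" "0 < q" "q \<le> q2" "delta0 \<beta> q < \<delta>"
  shows "0 < \<delta> \<and> \<beta> - 2*\<delta> \<le> s_delta \<beta> \<delta> q \<and> s_delta \<beta> \<delta> q \<le> s_delta \<beta> \<delta> q2 \<and> s_delta \<beta> \<delta> q2 < \<beta> - \<delta>"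
proof (intro conjI)
  show \<delta>_pos: "0 < \<delta>"
    using assms(5) h_tilde_root[OF assms(1,3)] by (simp add: delta0_def)
  show "\<beta> - 2*\<delta> \<le> s_delta \<beta> \<delta> q"
    using s_delta_root[OF \<delta>_pos assms(2,3,5)] by (rule conjunct1)
  show "s_delta \<beta> \<delta> q \<le> s_delta \<beta> \<delta> q2"
    by (rule s_delta_mono[OF \<delta>_pos assms(2-5)])
  have "delta0 \<beta> q2 < \<delta>" using delta0_antimono[OF assms(1,3,4)] assms(5) by simp
  then show "s_delta \<beta> \<delta> q2 < \<beta> - \<delta>"
    using s_delta_root[OF \<delta>_pos assms(2), of q2] assms(3,4) by simp
qed


theorem mainTheorem18:
  fixes \<beta> \<delta> q2 :: real
  assumes "\<beta> > 0" and "0 \<le> \<delta>" and "\<delta> < \<beta>" and "q2 > 0"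
  shows "\<exists>c>0. \<forall>(N::nat) (q::real). 0 < q \<and> q \<le> q2 \<longrightarrow>
           DD \<beta> N q \<delta> \<le> c * exp (real N * psi \<beta> q \<delta>)"
proof -
  define c1 where "c1 = exp (log_mgf_deriv \<beta> (h_tilde \<beta> q2 / 2) * h_tilde \<beta> q2)"
  define c2 where "c2 = exp (log_mgf_deriv \<beta> (max (\<bar>\<delta> - \<beta>/2\<bar>) (\<bar>\<delta> - \<beta>/2 + s_delta \<beta> \<delta> q2\<bar>))
                            * max (\<bar>\<beta> - 2*\<delta>\<bar>) (\<bar>s_delta \<beta> \<delta> q2\<bar>))"
  have subcritical: "DD \<beta> N q \<delta> \<le> c1 * exp (real N * psi \<beta> q \<delta>)"
    if q: "0 < q" "q \<le> q2" and regime: "\<delta> \<le> delta0 \<beta> q" for N q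
  proof -
    define h where "h = h_tilde \<beta> q"
    define h2 where "h2 = h_tilde \<beta> q2"
    have h: "0 \<le> h" "h \<le> h2" "h2 < \<beta>"
      using h_tilde_root[OF assms(1) q(1)] h_tilde_root[OF assms(1,4)] h_tilde_mono[OF assms(1) q]
      by (auto simp: h_def h2_def)
    have dom: "\<forall>x\<in>{0..1}. \<bar>- h/2 + h * x\<bar> \<le> h2/2"
    proof
      fix x :: real assume x: "x \<in> {0..1}"
      have "- h/2 + h * x = h * (x - 1/2)" by (simp add: algebra_simps)
      then have "\<bar>- h/2 + h * x\<bar> = h * \<bar>x - 1/2\<bar>" using h by (simp add: abs_mult)
      also have "\<dots> \<le> h2 * (1/2)" using x h by (intro mult_mono) (auto simp: abs_if)
      finally show "\<bar>- h/2 + h * x\<bar> \<le> h2/2" by simp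
    qed
    have "integral {0..1} (\<lambda>x. log_mgf \<beta> (- h/2 + h * x)) = affine_integral \<beta> (1/2) 0 h"
      unfolding affine_integral_def by (rule integral_cong) (simp add: algebra_simps)
    also have "\<dots> = GG \<beta> h" using GG_eq_affine_integral[OF assms(1), of h] h by simp
    finally have psi: "psi \<beta> q \<delta> = integral {0..1} (\<lambda>x. log_mgf \<beta> (- h/2 + h * x)) - h * q"
      using assms(2) regime by (simp add: psi_def h_def)
    have "DD \<beta> N q \<delta>
        \<le> exp (log_mgf_deriv \<beta> (h2/2) * \<bar>h\<bar>) * exp (real N * (integral {0..1} (\<lambda>x. log_mgf \<beta> (- h/2 + h * x)) - h * q))"
      using regime h by (intro DD_le_exp_integral[OF assms(1) _ _ _ dom]) (auto simp: delta0_def h_def)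
    also have "\<dots> \<le> c1 * exp (real N * psi \<beta> q \<delta>)"
      unfolding psi c1_def h2_def[symmetric] using h log_mgf_deriv_nonneg[of "h2/2" \<beta>]
      by (intro mult_right_mono) (auto intro!: mult_left_mono)
    finally show ?thesis .
  qed
  have supercritical: "DD \<beta> N q \<delta> \<le> c2 * exp (real N * psi \<beta> q \<delta>)"
    if q: "0 < q" "q \<le> q2" and regime: "delta0 \<beta> q < \<delta>" for N q
  proof -
    define a where "a = \<delta> - \<beta>/2"
    define s where "s = s_delta \<beta> \<delta> q"
    define s2 where "s2 = s_delta \<beta> \<delta> q2"
    define m where "m = max (\<bar>a\<bar>) (\<bar>a + s2\<bar>)"
    have \<delta>_pos: "0 < \<delta>" and s: "\<beta> - 2*\<delta> \<le> s" "s \<le> s2" "s2 < \<beta> - \<delta>"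
      using s_delta_regime_bounds[OF assms(1,3) q regime] by (auto simp: s_def s2_def)
    have m: "0 \<le> m" "m < \<beta>/2"
      unfolding m_def max_less_iff_conj abs_less_iff using \<delta>_pos assms(3) s by (auto simp: a_def)
    have "\<bar>a + s\<bar> \<le> m"
      using s abs_ge_self[of a] abs_ge_self[of "a + s2"] unfolding m_def a_def abs_le_iff by auto
    then have dom: "\<forall>x\<in>{0..1}. \<bar>a + s * x\<bar> \<le> m"
      using abs_add_mult_le_max[of _ a s] by (fastforce simp: m_def intro: order_trans)
    have "integral {0..1} (\<lambda>x. log_mgf \<beta> (a + s * x)) = affine_integral \<beta> 0 (\<delta> - \<beta>/2) s"
      unfolding affine_integral_def a_def by (rule integral_cong) (simp add: algebra_simps)
    also have "\<dots> = HH \<beta> \<delta> s" using HH_eq_affine_integral[OF \<delta>_pos assms(3), of s] s assms(3) by simp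
    finally have psi: "psi \<beta> q \<delta> = integral {0..1} (\<lambda>x. log_mgf \<beta> (a + s * x)) - s * q"
      using regime by (simp add: psi_def s_def)
    have "DD \<beta> N q \<delta>
        \<le> exp (log_mgf_deriv \<beta> m * \<bar>s\<bar>) * exp (real N * (integral {0..1} (\<lambda>x. log_mgf \<beta> (a + s * x)) - s * q))"
      by (rule DD_le_exp_integral[OF assms(1) _ m dom]) (simp add: a_def)
    also have "\<dots> \<le> c2 * exp (real N * psi \<beta> q \<delta>)"
    proof -
      have "\<bar>s\<bar> \<le> max (\<bar>\<beta> - 2*\<delta>\<bar>) (\<bar>s2\<bar>)" using s by (auto simp: abs_if max_def)
      then show ?thesis
        unfolding psi c2_def a_def[symmetric] s2_def[symmetric] m_def[symmetric] using log_mgf_deriv_nonneg[OF m]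
        by (intro mult_right_mono) (auto intro!: mult_left_mono)
    qed
    finally show ?thesis .
  qed
  have "DD \<beta> N q \<delta> \<le> (c1 + c2) * exp (real N * psi \<beta> q \<delta>)" if q: "0 < q" "q \<le> q2" for N q
  proof (cases "\<delta> \<le> delta0 \<beta> q")
    case True
    have "DD \<beta> N q \<delta> \<le> c1 * exp (real N * psi \<beta> q \<delta>)" by (rule subcritical[OF q True])
    also have "\<dots> \<le> (c1 + c2) * exp (real N * psi \<beta> q \<delta>)" by (intro mult_right_mono) (simp_all add: c2_def)
    finally show ?thesis .
  next
    case False
    then have "DD \<beta> N q \<delta> \<le> c2 * exp (real N * psi \<beta> q \<delta>)" by (intro supercritical[OF q]) simp
    also have "\<dots> \<le> (c1 + c2) * exp (real N * psi \<beta> q \<delta>)" by (intro mult_right_mono) (simp_all add: c1_def)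
    finally show ?thesis .
  qed
  moreover have "c1 + c2 > 0" by (simp add: c1_def c2_def add_pos_pos)
  ultimately show ?thesis by blast
qed

end
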